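(* Let $\mathcal{X}=({\bm X},m^{\bm X}_\bullet,\nu^{\bm X})$ and $\mathcal{Y}=({\bm Y},m^{\bm Y}_\bullet,\nu^{\bm Y})$ be finite Markov chains (not necessarily stationary) and let $C:{\bm X}\times{\bm Y}\to\mathbb{R}_+$ be a cost function. Then for every probability distribution $p$ on $\mathbb{N}$, $$d^{p}_{\mathrm{OTM}}(\mathcal{X},\mathcal{Y};C)\;\ge\;\mathbb{E}_{T\sim p}\big(d^{(T)}_{\mathrm{WL}}(\mathcal{X},\mathcal{Y};C)\big)=\sum_{k\in\mathbb{N}}p(k)\,d^{(k)}_{\mathrm{WL}}(\mathcal{X},\mathcal{Y};C).$$
   Context: A finite Markov chain $\mathcal{X}=({\bm X},m^{\bm X}_\bullet,\nu^{\bm X})$ consists of a finite set ${\bm X}$, a transition kernel $m^{\bm X}_\bullet:{\bm X}\to\mathcal{P}({\bm X})$ and an initial distribution $\nu^{\bm X}\in\mathcal{P}({\bm X})$. For $\alpha\in\mathcal{P}({\bm X}),\beta\in\mathcal{P}({\bm Y})$, $\mathcal{C}(\alpha,\beta)$ denotes the set of couplings of $\alpha$ and $\beta$. A Markovian coupling between $\mathcal{X}$ and $\mathcal{Y}$ is a stochastic process $(X_t,Y_t)_{t\in\mathbb{N}}$ with values in ${\bm X}\times{\bm Y}$ which is a (possibly time-inhomogeneous) Markov chain, such that $\mathrm{law}(X_0,Y_0)\in\mathcal{C}(\nu^{\bm X},\nu^{\bm Y})$ and, for every $t\in\mathbb{N}$ and $x\in{\bm X},y\in{\bm Y}$, the conditional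 law of $(X_{t+1},Y_{t+1})$ given $(X_t,Y_t)=(x,y)$ lies in $\mathcal{C}(m^{\bm X}_x,m^{\bm Y}_y)$. For $p\in\mathcal{P}(\mathbb{N})$ and $T\sim p$, the Optimal Transport Markov distance is $d^{p}_{\mathrm{OTM}}(\mathcal{X},\mathcal{Y};C)=\inf\mathbb{E}\,C(X_T,Y_T)$, the infimum over all Markovian couplings $(X_t,Y_t)_{t\in\mathbb{N}}$ independent of $T$. The depth-$k$ WL distance is $d^{(k)}_{\mathrm{WL}}(\mathcal{X},\mathcal{Y};C)=\inf\mathbb{E}\,C(X_k,Y_k)$, the infimum over all Markovian couplings. *)

theory Defs
  imports "HOL-Probability.Probability"
begin

definition couplings :: "'a pmf \<Rightarrow> 'b pmf \<Rightarrow> ('a \<times> 'b) pmf set" where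
  "couplings \<alpha> \<beta> = {\<mu>. map_pmf fst \<mu> = \<alpha> \<and> map_pmf snd \<mu> = \<beta>}"

definition markov_coupling ::
  "'x pmf \<Rightarrow> ('x \<Rightarrow> 'x pmf) \<Rightarrow> 'y pmf \<Rightarrow> ('y \<Rightarrow> 'y pmf)
   \<Rightarrow> ('x \<times> 'y) pmf \<Rightarrow> (nat \<Rightarrow> 'x \<times> 'y \<Rightarrow> ('x \<times> 'y) pmf) \<Rightarrow> bool" where
  "markov_coupling nuX mX nuY mY mu0 K \<longleftrightarrow>
     mu0 \<in> couplings nuX nuY \<and> (\<forall>t x y. K t (x, y) \<in> couplings (mX x) (mY y))"

fun coupling_law :: "('x \<times> 'y) pmf \<Rightarrow> (nat \<Rightarrow> 'x \<times> 'y \<Rightarrow> ('x \<times> 'y) pmf) \<Rightarrow> nat \<Rightarrow> ('x \<times> 'y) pmf" where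
  "coupling_law mu0 K 0 = mu0"
| "coupling_law mu0 K (Suc t) = bind_pmf (coupling_law mu0 K t) (K t)"

definition d_WL ::
  "nat \<Rightarrow> 'x pmf \<Rightarrow> ('x \<Rightarrow> 'x pmf) \<Rightarrow> 'y pmf \<Rightarrow> ('y \<Rightarrow> 'y pmf) \<Rightarrow> ('x \<Rightarrow> 'y \<Rightarrow> real) \<Rightarrow> real" where
  "d_WL k nuX mX nuY mY C =
     (INF c \<in> {(mu0, K). markov_coupling nuX mX nuY mY mu0 K}.
        measure_pmf.expectation (coupling_law (fst c) (snd c) k) (\<lambda>(x, y). C x y))"

text \<open>T ~ p independent of the coupling: E C(X_T,Y_T) = E_{k~p} E C(X_k,Y_k).\<close>
definition d_OTM ::
  "nat pmf \<Rightarrow> 'x pmf \<Rightarrow> ('x \<Rightarrow> 'x pmf) \<Rightarrow> 'y pmf \<Rightarrow> ('y \<Rightarrow> 'y pmf) \<Rightarrow> ('x \<Rightarrow> 'y \<Rightarrow> real) \<Rightarrow> real" where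
  "d_OTM p nuX mX nuY mY C =
     (INF c \<in> {(mu0, K). markov_coupling nuX mX nuY mY mu0 K}.
        measure_pmf.expectation p (\<lambda>k.
          measure_pmf.expectation (coupling_law (fst c) (snd c) k) (\<lambda>(x, y). C x y)))"

end

theory Submission
  imports Defs
begin

text \<open>For every fixed Markovian coupling, the time-k expected cost dominates the depth-k
  WL distance; averaging over k ~ p and then taking the infimum over couplings gives the
  inequality, because an expectation of infima is at most the infimum of expectations.
  On finite state spaces all these quantities are bounded, which makes the expectation
  over p an absolutely convergent series.\<close>

lemma bdd_below_image_if_abs_le:
  fixes f :: "'c \<Rightarrow> real"
  assumes "\<And>c. c \<in> S \<Longrightarrow> \<bar>f c\<bar> \<le> B"
  shows "bdd_below (f ` S)"
proof (rule bdd_belowI[of _ "- B"])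
  show "- B \<le> y" if "y \<in> f ` S" for y
    using that assms by (metis abs_le_D2 imageE minus_le_iff)
qed

lemma abs_INF_le:
  fixes f :: "'c \<Rightarrow> real"
  assumes "S \<noteq> {}" and "\<And>c. c \<in> S \<Longrightarrow> \<bar>f c\<bar> \<le> B"
  shows "\<bar>INF c\<in>S. f c\<bar> \<le> B"
proof -
  obtain c0 where "c0 \<in> S"
    using assms(1) by blast
  have "- B \<le> (INF c\<in>S. f c)"
    using assms(1) by (rule cINF_greatest) (use assms(2) in \<open>force dest: abs_le_D2\<close>)
  moreover have "(INF c\<in>S. f c) \<le> f c0"
    using bdd_below_image_if_abs_le[OF assms(2)] \<open>c0 \<in> S\<close> by (rule cINF_lower)
  ultimately show ?thesis
    using assms(2)[OF \<open>c0 \<in> S\<close>] by (simp add: abs_le_iff)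
qed

lemma pmf_expectation_INF_le_INF_pmf_expectation:
  fixes f :: "'c \<Rightarrow> 'a \<Rightarrow> real"
  assumes "S \<noteq> {}" and bound: "\<And>c x. c \<in> S \<Longrightarrow> \<bar>f c x\<bar> \<le> B"
  shows "measure_pmf.expectation p (\<lambda>x. INF c\<in>S. f c x)
           \<le> (INF c\<in>S. measure_pmf.expectation p (f c))"
proof (rule cINF_greatest[OF assms(1)])
  fix c assume "c \<in> S"
  have "\<bar>INF c\<in>S. f c x\<bar> \<le> B" for x
    using assms(1) bound by (rule abs_INF_le)
  then have "integrable p (\<lambda>x. INF c\<in>S. f c x)"
    by (intro measure_pmf.integrable_const_bound[where B = B]) auto
  moreover have "integrable p (f c)"
    using bound[OF \<open>c \<in> S\<close>] by (intro measure_pmf.integrable_const_bound[where B = B]) auto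
  moreover have "(INF c\<in>S. f c x) \<le> f c x" for x
    using bdd_below_image_if_abs_le[of S "\<lambda>c. f c x", OF bound] \<open>c \<in> S\<close> by (rule cINF_lower)
  ultimately show "measure_pmf.expectation p (\<lambda>x. INF c\<in>S. f c x) \<le> measure_pmf.expectation p (f c)"
    by (rule Bochner_Integration.integral_mono)
qed

lemma pmf_expectation_eq_infsum_if_bounded:
  fixes g :: "'a \<Rightarrow> real"
  assumes "\<And>x. \<bar>g x\<bar> \<le> B"
  shows "measure_pmf.expectation p g = (\<Sum>\<^sub>\<infinity>x. pmf p x * g x)"
  unfolding pmf_expectation_eq_infsetsum
  by (rule infsetsum_infsum, rule abs_summable_on_comparison_test'[where g = "\<lambda>x. pmf p x * B"])
     (use assms in \<open>auto simp: abs_mult intro!: mult_left_mono\<close>)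

lemma abs_pmf_expectation_le_Max:
  fixes g :: "'a::finite \<Rightarrow> real"
  shows "\<bar>measure_pmf.expectation q g\<bar> \<le> Max (range (\<lambda>x. \<bar>g x\<bar>))"
proof -
  have "\<bar>measure_pmf.expectation q g\<bar> \<le> measure_pmf.expectation q (\<lambda>x. \<bar>g x\<bar>)"
    by (rule integral_abs_bound)
  also have "\<dots> \<le> measure_pmf.expectation q (\<lambda>_. Max (range (\<lambda>x. \<bar>g x\<bar>)))"
    by (rule Bochner_Integration.integral_mono) (auto simp: integrable_measure_pmf_finite)
  finally show ?thesis
    by simp
qed

lemma markov_coupling_pair_pmf:
  "markov_coupling nuX mX nuY mY (pair_pmf nuX nuY) (\<lambda>t (x, y). pair_pmf (mX x) (mY y))"
  unfolding markov_coupling_def couplings_def by (simp add: map_fst_pair_pmf map_snd_pair_pmf)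

theorem proposition6:
  fixes nuX :: "'x::finite pmf" and mX :: "'x \<Rightarrow> 'x pmf"
    and nuY :: "'y::finite pmf" and mY :: "'y \<Rightarrow> 'y pmf"
    and C :: "'x \<Rightarrow> 'y \<Rightarrow> real" and p :: "nat pmf"
  assumes "\<And>x y. C x y \<ge> 0"
  shows "d_OTM p nuX mX nuY mY C \<ge> measure_pmf.expectation p (\<lambda>T. d_WL T nuX mX nuY mY C)
       \<and> measure_pmf.expectation p (\<lambda>T. d_WL T nuX mX nuY mY C)
           = (\<Sum>\<^sub>\<infinity>k. pmf p k * d_WL k nuX mX nuY mY C)"
proof -
  define S where "S = {(mu0, K). markov_coupling nuX mX nuY mY mu0 K}"
  define cost where "cost = (\<lambda>c k. measure_pmf.expectation (coupling_law (fst c) (snd c) k) (case_prod C))"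
  define B where "B = Max (range (\<lambda>z. \<bar>case_prod C z\<bar>))"
  have "S \<noteq> {}"
    using markov_coupling_pair_pmf unfolding S_def by blast
  have cost_bound: "\<bar>cost c k\<bar> \<le> B" for c k
    unfolding cost_def B_def by (rule abs_pmf_expectation_le_Max)
  have d_WL_eq: "d_WL k nuX mX nuY mY C = (INF c\<in>S. cost c k)" for k
    unfolding d_WL_def S_def cost_def ..
  have d_OTM_eq: "d_OTM p nuX mX nuY mY C = (INF c\<in>S. measure_pmf.expectation p (cost c))"
    unfolding d_OTM_def S_def cost_def ..
  have d_WL_bound: "\<bar>d_WL k nuX mX nuY mY C\<bar> \<le> B" for k
    unfolding d_WL_eq using \<open>S \<noteq> {}\<close> cost_bound by (rule abs_INF_le)
  have "measure_pmf.expectation p (\<lambda>k. d_WL k nuX mX nuY mY C) \<le> d_OTM p nuX mX nuY mY C"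
    unfolding d_WL_eq d_OTM_eq using \<open>S \<noteq> {}\<close> cost_bound
    by (rule pmf_expectation_INF_le_INF_pmf_expectation)
  with pmf_expectation_eq_infsum_if_bounded[OF d_WL_bound] show ?thesis
    by simp
qed

end
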